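(* Let $\Gamma$ be a finitely generated group with finite symmetric generating set $S$ acting by permutations on a countable set $X$, and $w:X\to(0,\infty)$ balanced. If there is no $w$-Følner sequence in $X$, then there exists a $w$-compression system.
   Context: $w$ is balanced: there is $C>1$ with $1/C<w(sx)/w(x)<C$ for all $x\in X$, $s\in S$. For finite $H\subseteq X$, $w(H)=\sum_{x\in H}w(x)$. A sequence $(F_n)$ of finite nonempty subsets of $X$ is a $w$-Følner sequence if for every $\epsilon>0$ and finite $L\subset\Gamma$ there is $n_{\epsilon,L}$ with $w(gF_n\cup F_n)/w(F_n)<1+\epsilon$ for all $n\ge n_{\epsilon,L}$, $g\in L$. A $w$-compression system is a finite set $T\subset\Gamma$ together with bounded nonnegative functions $\Psi_g:X\to\mathbb{R}$ ($g\in T$) such that for every $x\in X$: $\sum_{g\in T}\Psi_g(x)=1$ and $\sum_{g\in T}\Psi_g(g^{-1}x)\frac{w(g^{-1}x)}{w(x)}<\frac12$. *)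

theory Defs
  imports Complex_Main "HOL-Algebra.Group_Action" "HOL-Algebra.Generated_Groups" "HOL-Library.Countable_Set"
begin

definition wmeas :: "('x \<Rightarrow> real) \<Rightarrow> 'x set \<Rightarrow> real" where
  "wmeas w H = (\<Sum>x\<in>H. w x)"

definition balanced ::
  "('g \<Rightarrow> 'x \<Rightarrow> 'x) \<Rightarrow> 'g set \<Rightarrow> 'x set \<Rightarrow> ('x \<Rightarrow> real) \<Rightarrow> bool" where
  "balanced \<phi> S X w \<longleftrightarrow>
     (\<exists>C::real. C > 1 \<and> (\<forall>x\<in>X. \<forall>s\<in>S.
        1 / C < w (\<phi> s x) / w x \<and> w (\<phi> s x) / w x < C))"

definition w_folner ::
  "('g, 'b) monoid_scheme \<Rightarrow> ('g \<Rightarrow> 'x \<Rightarrow> 'x) \<Rightarrow> 'x set \<Rightarrow> ('x \<Rightarrow> real)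
     \<Rightarrow> (nat \<Rightarrow> 'x set) \<Rightarrow> bool" where
  "w_folner G \<phi> X w F \<longleftrightarrow>
     (\<forall>n. finite (F n) \<and> F n \<noteq> {} \<and> F n \<subseteq> X) \<and>
     (\<forall>\<epsilon>>0. \<forall>L. finite L \<and> L \<subseteq> carrier G \<longrightarrow>
        (\<exists>N. \<forall>n\<ge>N. \<forall>g\<in>L.
           wmeas w (\<phi> g ` F n \<union> F n) / wmeas w (F n) < 1 + \<epsilon>))"

definition w_compression_system ::
  "('g, 'b) monoid_scheme \<Rightarrow> ('g \<Rightarrow> 'x \<Rightarrow> 'x) \<Rightarrow> 'x set \<Rightarrow> ('x \<Rightarrow> real)
     \<Rightarrow> 'g set \<Rightarrow> ('g \<Rightarrow> 'x \<Rightarrow> real) \<Rightarrow> bool" where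
  "w_compression_system G \<phi> X w T \<Psi> \<longleftrightarrow>
     finite T \<and> T \<subseteq> carrier G \<and>
     (\<exists>B::real. \<forall>g\<in>T. \<forall>x\<in>X. 0 \<le> \<Psi> g x \<and> \<Psi> g x \<le> B) \<and>
     (\<forall>x\<in>X. (\<Sum>g\<in>T. \<Psi> g x) = 1 \<and>
        (\<Sum>g\<in>T. \<Psi> g (\<phi> (inv\<^bsub>G\<^esub> g) x) * (w (\<phi> (inv\<^bsub>G\<^esub> g) x) / w x)) < 1 / 2)"

end

theory Submission
  imports Defs "HOL-Analysis.Analysis"
begin

text \<open>
  1. No w-Folner sequence gives a uniform isoperimetric inequality: for some epsilon > 0 every
     finite F has a generator s with w(sF - F) > epsilon w(F). Otherwise almost invariant sets
     would form a w-Folner sequence, because the boundary of any group element is controlled by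
     the boundaries of the generators (this uses that w is balanced).
  2. Iterating the inequality, a finite set T of group elements satisfies w(TA) >= 3 w(A) for
     every finite A.
  3. By the fractional Hall theorem, every finite part of X can send its weight w into the
     capacities w/3 along T; normalising by w gives the functions Psi on finite sets, and
     compactness of the unit cube (Tychonoff) yields them on all of X.
\<close>

text \<open>A map tau sending a left vertex y and an index g in T to a right vertex tau y g describes a
  bipartite graph; nbhd tau T A is the set of right vertices adjacent to A.\<close>
definition nbhd :: "('y \<Rightarrow> 'i \<Rightarrow> 'x) \<Rightarrow> 'i set \<Rightarrow> 'y set \<Rightarrow> 'x set" where
  "nbhd \<tau> T A = (\<Union>y\<in>A. \<tau> y ` T)"

definition hall_condition ::
  "('y \<Rightarrow> 'i \<Rightarrow> 'x) \<Rightarrow> 'i set \<Rightarrow> 'y set \<Rightarrow> ('y \<Rightarrow> real) \<Rightarrow> ('x \<Rightarrow> real) \<Rightarrow> bool" where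
  "hall_condition \<tau> T L a c \<longleftrightarrow> (\<forall>A\<subseteq>L. sum a A \<le> sum c (nbhd \<tau> T A))"

definition load ::
  "('y \<Rightarrow> 'i \<Rightarrow> 'x) \<Rightarrow> 'i set \<Rightarrow> 'y set \<Rightarrow> ('y \<Rightarrow> 'i \<Rightarrow> real) \<Rightarrow> 'x \<Rightarrow> real" where
  "load \<tau> T L f x = (\<Sum>y\<in>L. \<Sum>g\<in>T. if \<tau> y g = x then f y g else 0)"

definition fractional_matching ::
  "('y \<Rightarrow> 'i \<Rightarrow> 'x) \<Rightarrow> 'i set \<Rightarrow> 'y set \<Rightarrow> ('y \<Rightarrow> real) \<Rightarrow> ('x \<Rightarrow> real)
     \<Rightarrow> ('y \<Rightarrow> 'i \<Rightarrow> real) \<Rightarrow> bool" where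
  "fractional_matching \<tau> T L a c f \<longleftrightarrow>
     (\<forall>y g. 0 \<le> f y g) \<and> (\<forall>y\<in>L. sum (f y) T = a y) \<and> (\<forall>x. load \<tau> T L f x \<le> c x)"

definition residual ::
  "('y \<Rightarrow> 'i \<Rightarrow> 'x) \<Rightarrow> 'i set \<Rightarrow> 'y set \<Rightarrow> ('x \<Rightarrow> real) \<Rightarrow> 'x \<Rightarrow> real" where
  "residual \<tau> T A c x = (if x \<in> nbhd \<tau> T A then 0 else c x)"

text \<open>Edges whose ends still carry positive demand and positive capacity; their number, together
  with the size of L, is the induction measure in the fractional Hall theorem.\<close>
definition active_edges ::
  "('y \<Rightarrow> 'i \<Rightarrow> 'x) \<Rightarrow> 'i set \<Rightarrow> 'y set \<Rightarrow> ('y \<Rightarrow> real) \<Rightarrow> ('x \<Rightarrow> real) \<Rightarrow> ('y \<times> 'i) set" where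
  "active_edges \<tau> T L a c = {(y, g) \<in> L \<times> T. 0 < a y \<and> 0 < c (\<tau> y g)}"

lemma nbhd_finite: "finite A \<Longrightarrow> finite T \<Longrightarrow> finite (nbhd \<tau> T A)"
  unfolding nbhd_def by auto

lemma nbhd_Un: "nbhd \<tau> T (A \<union> B) = nbhd \<tau> T A \<union> nbhd \<tau> T B"
  unfolding nbhd_def by auto

lemma nbhd_memI: "y \<in> A \<Longrightarrow> g \<in> T \<Longrightarrow> \<tau> y g \<in> nbhd \<tau> T A"
  unfolding nbhd_def by auto

lemma hall_subset: "hall_condition \<tau> T L a c \<Longrightarrow> A \<subseteq> L \<Longrightarrow> hall_condition \<tau> T A a c"
  unfolding hall_condition_def by auto

lemma load_union:
  assumes "finite L" "A \<subseteq> L"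
  shows "load \<tau> T L f x = load \<tau> T A f x + load \<tau> T (L - A) f x"
  unfolding load_def using assms by (simp add: sum.subset_diff add.commute)

lemma load_cong:
  "(\<And>y. y \<in> L \<Longrightarrow> f y = f' y) \<Longrightarrow> load \<tau> T L f x = load \<tau> T L f' x"
  unfolding load_def by (intro sum.cong) auto

lemma load_outside_nbhd: "x \<notin> nbhd \<tau> T A \<Longrightarrow> load \<tau> T A f x = 0"
  unfolding load_def by (auto intro!: sum.neutral simp: nbhd_memI)

lemma matching_glue:
  assumes "finite L" and "A \<subseteq> L" and c0: "\<forall>x. 0 \<le> c x"
    and f1: "fractional_matching \<tau> T A a c f1"
    and f2: "fractional_matching \<tau> T (L - A) a (residual \<tau> T A c) f2"
  shows "fractional_matching \<tau> T L a c (\<lambda>y. if y \<in> A then f1 y else f2 y)"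
proof -
  let ?f = "\<lambda>y. if y \<in> A then f1 y else f2 y"
  have split: "load \<tau> T L ?f x = load \<tau> T A f1 x + load \<tau> T (L - A) f2 x" for x
  proof -
    have "load \<tau> T L ?f x = load \<tau> T A ?f x + load \<tau> T (L - A) ?f x"
      by (rule load_union[OF assms(1,2)])
    also have "load \<tau> T A ?f x = load \<tau> T A f1 x" by (rule load_cong) simp
    also have "load \<tau> T (L - A) ?f x = load \<tau> T (L - A) f2 x" by (rule load_cong) simp
    finally show ?thesis .
  qed
  have f1_load: "load \<tau> T A f1 x \<le> c x" for x
    using f1 unfolding fractional_matching_def by blast
  have f2_load: "load \<tau> T (L - A) f2 x \<le> residual \<tau> T A c x" for x
    using f2 unfolding fractional_matching_def by blast
  have "load \<tau> T L ?f x \<le> c x" for x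
  proof (cases "x \<in> nbhd \<tau> T A")
    case True
    then show ?thesis using split[of x] f1_load[of x] f2_load[of x] by (simp add: residual_def)
  next
    case False
    then show ?thesis
      using split[of x] f2_load[of x] load_outside_nbhd[OF False] by (simp add: residual_def)
  qed
  moreover have "\<forall>y g. 0 \<le> ?f y g" using f1 f2 unfolding fractional_matching_def by simp
  moreover have "\<forall>y\<in>L. sum (?f y) T = a y" using f1 f2 unfolding fractional_matching_def by simp
  ultimately show ?thesis unfolding fractional_matching_def by blast
qed

lemma hall_residual:
  assumes fin: "finite L" "finite T" and h: "hall_condition \<tau> T L a c"
    and AL: "A \<subseteq> L" and tight: "sum a A = sum c (nbhd \<tau> T A)"
  shows "hall_condition \<tau> T (L - A) a (residual \<tau> T A c)"
  unfolding hall_condition_def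
proof (intro allI impI)
  fix B assume B: "B \<subseteq> L - A"
  have finite: "finite A" "finite B" "finite (nbhd \<tau> T A)" "finite (nbhd \<tau> T B)"
    using AL B fin by (auto intro: rev_finite_subset nbhd_finite)
  have "sum a A + sum a B = sum a (A \<union> B)"
    using B finite by (intro sum.union_disjoint[symmetric]) auto
  also have "\<dots> \<le> sum c (nbhd \<tau> T (A \<union> B))"
    using h AL B unfolding hall_condition_def by blast
  also have "nbhd \<tau> T (A \<union> B) = nbhd \<tau> T A \<union> (nbhd \<tau> T B - nbhd \<tau> T A)"
    by (auto simp: nbhd_Un)
  also have "sum c \<dots> = sum c (nbhd \<tau> T A) + sum c (nbhd \<tau> T B - nbhd \<tau> T A)"
    using finite by (intro sum.union_disjoint) auto
  also have "sum c (nbhd \<tau> T B - nbhd \<tau> T A) = sum (residual \<tau> T A c) (nbhd \<tau> T B)"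
    unfolding residual_def using finite
    by (subst sum.If_cases) (auto simp: Diff_eq Int_commute)
  finally show "sum a B \<le> sum (residual \<tau> T A c) (nbhd \<tau> T B)"
    using tight by simp
qed

definition lower :: "('a \<Rightarrow> real) \<Rightarrow> 'a \<Rightarrow> real \<Rightarrow> 'a \<Rightarrow> real" where
  "lower f z t v = f v - (if v = z then t else 0)"

lemma sum_lower: "finite A \<Longrightarrow> sum (lower f z t) A = sum f A - (if z \<in> A then t else 0)"
  unfolding lower_def by (simp add: sum_subtractf sum.delta)

lemma hall_lower:
  assumes fin: "finite L" "finite T" and h: "hall_condition \<tau> T L a c"
    and y0: "y0 \<in> L" and g0: "g0 \<in> T"
    and slack: "\<And>A. A \<subseteq> L - {y0} \<Longrightarrow> \<tau> y0 g0 \<in> nbhd \<tau> T A \<Longrightarrow> sum a A + t \<le> sum c (nbhd \<tau> T A)"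
  shows "hall_condition \<tau> T L (lower a y0 t) (lower c (\<tau> y0 g0) t)"
  unfolding hall_condition_def
proof (intro allI impI)
  fix A assume AL: "A \<subseteq> L"
  have finite: "finite A" "finite (nbhd \<tau> T A)"
    using AL fin by (auto intro: rev_finite_subset nbhd_finite)
  have hA: "sum a A \<le> sum c (nbhd \<tau> T A)" using h AL unfolding hall_condition_def by blast
  have "y0 \<in> A \<Longrightarrow> \<tau> y0 g0 \<in> nbhd \<tau> T A" using g0 by (auto intro: nbhd_memI)
  moreover have "y0 \<notin> A \<Longrightarrow> A \<subseteq> L - {y0}" using AL by blast
  ultimately show "sum (lower a y0 t) A \<le> sum (lower c (\<tau> y0 g0) t) (nbhd \<tau> T A)"
    using hA slack[of A] by (auto simp: sum_lower finite)
qed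

lemma matching_raise:
  assumes fin: "finite L" "finite T" and y0: "y0 \<in> L" and g0: "g0 \<in> T" and t: "0 \<le> t"
    and f: "fractional_matching \<tau> T L (lower a y0 t) (lower c (\<tau> y0 g0) t) f"
  shows "fractional_matching \<tau> T L a c (\<lambda>y g. f y g + (if y = y0 \<and> g = g0 then t else 0))"
proof -
  let ?f = "\<lambda>y g. f y g + (if y = y0 \<and> g = g0 then t else 0)"
  have row: "sum (?f y) T = sum (f y) T + (if y = y0 then t else 0)" for y
    using fin g0 by (simp add: sum.distrib)
  have load_raised: "load \<tau> T L ?f x = load \<tau> T L f x + (if \<tau> y0 g0 = x then t else 0)" for x
  proof -
    define d where "d = (if \<tau> y0 g0 = x then t else 0)"
    have split_term: "(if \<tau> y g = x then ?f y g else 0)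
        = (if \<tau> y g = x then f y g else 0) + (if y = y0 then if g = g0 then d else 0 else 0)" for y g
      unfolding d_def by auto
    have row_d: "(\<Sum>g\<in>T. if y = y0 then if g = g0 then d else 0 else 0) = (if y = y0 then d else 0)" for y
      using fin g0 by (cases "y = y0") (simp_all add: sum.delta)
    show ?thesis
      unfolding load_def split_term sum.distrib row_d using fin y0 by (simp add: sum.delta d_def)
  qed
  have load_f: "load \<tau> T L f x \<le> c x - (if x = \<tau> y0 g0 then t else 0)" for x
    using f unfolding fractional_matching_def lower_def by blast
  have "load \<tau> T L ?f x \<le> c x" for x
    using load_raised[of x] load_f[of x] by (cases "x = \<tau> y0 g0") auto
  then show ?thesis
    using f t row unfolding fractional_matching_def lower_def by (auto simp: add_increasing)
qed

lemma finite_active_edges: "finite L \<Longrightarrow> finite T \<Longrightarrow> finite (active_edges \<tau> T L a c)"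
  unfolding active_edges_def by (auto intro: finite_subset[of _ "L \<times> T"])

lemma card_active_edges_mono:
  assumes "finite L" "finite T" "L' \<subseteq> L" "\<forall>y\<in>L'. a' y \<le> a y" "\<forall>x. c' x \<le> c x"
  shows "card (active_edges \<tau> T L' a' c') \<le> card (active_edges \<tau> T L a c)"
proof (rule card_mono)
  show "finite (active_edges \<tau> T L a c)" using assms(1,2) by (rule finite_active_edges)
  show "active_edges \<tau> T L' a' c' \<subseteq> active_edges \<tau> T L a c"
    unfolding active_edges_def using assms(3-5) by (fastforce intro: less_le_trans)
qed

lemma split_measure_decreases:
  assumes fin: "finite L" "finite T" and c0: "\<forall>x. 0 \<le> c x" and A: "A \<subseteq> L" "A \<noteq> {}" "A \<noteq> L"
  shows "card A + card (active_edges \<tau> T A a c) < card L + card (active_edges \<tau> T L a c)"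
    and "card (L - A) + card (active_edges \<tau> T (L - A) a (residual \<tau> T A c))
      < card L + card (active_edges \<tau> T L a c)"
proof -
  have "card A < card L" "card (L - A) < card L"
    using A fin(1) by (auto intro!: psubset_card_mono)
  moreover have "card (active_edges \<tau> T A a c) \<le> card (active_edges \<tau> T L a c)"
    "card (active_edges \<tau> T (L - A) a (residual \<tau> T A c)) \<le> card (active_edges \<tau> T L a c)"
    using fin A(1) c0 by (auto intro!: card_active_edges_mono simp: residual_def)
  ultimately show "card A + card (active_edges \<tau> T A a c) < card L + card (active_edges \<tau> T L a c)"
    "card (L - A) + card (active_edges \<tau> T (L - A) a (residual \<tau> T A c))
      < card L + card (active_edges \<tau> T L a c)" by linarith+
qed

lemma zero_demand_matching:
  "\<forall>y\<in>L. a y = 0 \<Longrightarrow> \<forall>x. 0 \<le> c x \<Longrightarrow> fractional_matching \<tau> T L a c (\<lambda>_ _. 0)"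
  unfolding fractional_matching_def load_def by simp

text \<open>By Hall's condition for a single vertex with positive demand, one of its edges ends at
  positive capacity.\<close>
lemma positive_capacity_edge:
  assumes h: "hall_condition \<tau> T L a c" and y0: "y0 \<in> L" "0 < a y0"
  obtains g0 where "g0 \<in> T" "0 < c (\<tau> y0 g0)"
proof -
  have "a y0 \<le> sum c (\<tau> y0 ` T)" using h y0(1) unfolding hall_condition_def nbhd_def by force
  have "\<exists>g\<in>T. 0 < c (\<tau> y0 g)"
  proof (rule ccontr)
    assume "\<not> (\<exists>g\<in>T. 0 < c (\<tau> y0 g))"
    then have "sum c (\<tau> y0 ` T) \<le> 0" by (intro sum_nonpos) (auto simp: not_less)
    then show False using \<open>a y0 \<le> sum c (\<tau> y0 ` T)\<close> y0(2) by linarith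
  qed
  then show ?thesis using that by blast
qed

text \<open>Choose t as the largest amount allowed by the demand at y0, the capacity at its neighbour and
  all slacks.\<close>
lemma hall_augment_step:
  assumes fin: "finite L" "finite T" and h: "hall_condition \<tau> T L a c"
    and y0: "y0 \<in> L" and g0: "g0 \<in> T" and pos: "0 < a y0" "0 < c (\<tau> y0 g0)"
    and strict: "\<And>A. A \<subseteq> L - {y0} \<Longrightarrow> A \<noteq> {} \<Longrightarrow> sum a A < sum c (nbhd \<tau> T A)"
  obtains t where "0 < t" "t \<le> a y0" "t \<le> c (\<tau> y0 g0)"
    and "hall_condition \<tau> T L (lower a y0 t) (lower c (\<tau> y0 g0) t)"
    and "t = a y0 \<or> t = c (\<tau> y0 g0) \<or>
      (\<exists>A. A \<subseteq> L - {y0} \<and> A \<noteq> {} \<and>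
        sum (lower a y0 t) A = sum (lower c (\<tau> y0 g0) t) (nbhd \<tau> T A))"
proof -
  define x0 where "x0 = \<tau> y0 g0"
  define \<A> where "\<A> = {A. A \<subseteq> L - {y0} \<and> A \<noteq> {} \<and> x0 \<in> nbhd \<tau> T A}"
  define slack where "slack A = sum c (nbhd \<tau> T A) - sum a A" for A
  define t where "t = Min (insert (a y0) (insert (c x0) (slack ` \<A>)))"
  have "finite \<A>" unfolding \<A>_def using fin(1) by (auto intro: finite_subset[of _ "Pow L"])
  then have fin_cands: "finite (insert (a y0) (insert (c x0) (slack ` \<A>)))" by simp
  have t_le: "t \<le> v" if "v \<in> insert (a y0) (insert (c x0) (slack ` \<A>))" for v
    unfolding t_def using fin_cands that by (rule Min_le)
  have t_in: "t \<in> insert (a y0) (insert (c x0) (slack ` \<A>))"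
    unfolding t_def using fin_cands by (rule Min_in) simp
  have slack_pos: "0 < slack A" if "A \<in> \<A>" for A
    using strict that unfolding \<A>_def slack_def by auto
  show ?thesis
  proof (rule that)
    show "0 < t" using t_in slack_pos pos unfolding x0_def by auto
    show "t \<le> a y0" "t \<le> c (\<tau> y0 g0)" using t_le unfolding x0_def by auto
    show "hall_condition \<tau> T L (lower a y0 t) (lower c (\<tau> y0 g0) t)"
    proof (rule hall_lower[OF fin h y0 g0])
      fix A assume A: "A \<subseteq> L - {y0}" "\<tau> y0 g0 \<in> nbhd \<tau> T A"
      then have "A \<in> \<A>" unfolding \<A>_def x0_def nbhd_def by auto
      then show "sum a A + t \<le> sum c (nbhd \<tau> T A)" using t_le[of "slack A"] unfolding slack_def by auto
    qed
    have tight: "sum (lower a y0 t) A = sum (lower c (\<tau> y0 g0) t) (nbhd \<tau> T A)"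
      if "A \<in> \<A>" "t = slack A" for A
    proof -
      have "finite A" "finite (nbhd \<tau> T A)"
        using that(1) fin unfolding \<A>_def by (auto intro: rev_finite_subset nbhd_finite)
      then show ?thesis using that unfolding \<A>_def slack_def x0_def by (auto simp: sum_lower)
    qed
    show "t = a y0 \<or> t = c (\<tau> y0 g0) \<or>
      (\<exists>A. A \<subseteq> L - {y0} \<and> A \<noteq> {} \<and>
        sum (lower a y0 t) A = sum (lower c (\<tau> y0 g0) t) (nbhd \<tau> T A))"
      using t_in tight unfolding x0_def \<A>_def by blast
  qed
qed

lemma augmentation:
  assumes fin: "finite L" "finite T" and a0: "\<forall>y\<in>L. 0 \<le> a y" and c0: "\<forall>x. 0 \<le> c x"
    and h: "hall_condition \<tau> T L a c"
    and y0: "y0 \<in> L" "0 < a y0" and g0: "g0 \<in> T" "0 < c (\<tau> y0 g0)"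
    and no_tight: "\<And>A. A \<subseteq> L \<Longrightarrow> A \<noteq> {} \<Longrightarrow> A \<noteq> L \<Longrightarrow> sum a A \<noteq> sum c (nbhd \<tau> T A)"
  obtains a' c' where "\<forall>y\<in>L. 0 \<le> a' y" "\<forall>x. 0 \<le> c' x" "hall_condition \<tau> T L a' c'"
    and "card (active_edges \<tau> T L a' c') \<le> card (active_edges \<tau> T L a c)"
    and "\<And>f. fractional_matching \<tau> T L a' c' f \<Longrightarrow> \<exists>f. fractional_matching \<tau> T L a c f"
    and "card (active_edges \<tau> T L a' c') < card (active_edges \<tau> T L a c) \<or>
      (\<exists>A. A \<subseteq> L \<and> A \<noteq> {} \<and> A \<noteq> L \<and> sum a' A = sum c' (nbhd \<tau> T A))"
proof -
  have strict: "sum a A < sum c (nbhd \<tau> T A)" if "A \<subseteq> L - {y0}" "A \<noteq> {}" for A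
  proof -
    have "A \<subseteq> L" "A \<noteq> L" using that y0(1) by auto
    then have "sum a A \<noteq> sum c (nbhd \<tau> T A)" "sum a A \<le> sum c (nbhd \<tau> T A)"
      using no_tight that(2) h unfolding hall_condition_def by blast+
    then show ?thesis by linarith
  qed
  obtain t where t: "0 < t" "t \<le> a y0" "t \<le> c (\<tau> y0 g0)"
    and h': "hall_condition \<tau> T L (lower a y0 t) (lower c (\<tau> y0 g0) t)"
    and progress: "t = a y0 \<or> t = c (\<tau> y0 g0) \<or>
      (\<exists>A. A \<subseteq> L - {y0} \<and> A \<noteq> {} \<and> sum (lower a y0 t) A = sum (lower c (\<tau> y0 g0) t) (nbhd \<tau> T A))"
    by (rule hall_augment_step[OF fin h y0(1) g0(1) y0(2) g0(2) strict])
  let ?a = "lower a y0 t" and ?c = "lower c (\<tau> y0 g0) t"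
  show ?thesis
  proof (rule that)
    show "\<forall>y\<in>L. 0 \<le> ?a y" "\<forall>x. 0 \<le> ?c x" using a0 c0 t unfolding lower_def by auto
    show "hall_condition \<tau> T L ?a ?c" by (rule h')
    show "card (active_edges \<tau> T L ?a ?c) \<le> card (active_edges \<tau> T L a c)"
      using fin t by (intro card_active_edges_mono) (auto simp: lower_def)
    show "\<exists>f. fractional_matching \<tau> T L a c f" if "fractional_matching \<tau> T L ?a ?c f" for f
      using matching_raise[OF fin y0(1) g0(1) less_imp_le[OF t(1)] that] by blast
    have "card (active_edges \<tau> T L ?a ?c) < card (active_edges \<tau> T L a c)"
      if "t = a y0 \<or> t = c (\<tau> y0 g0)"
    proof (rule psubset_card_mono)
      show "finite (active_edges \<tau> T L a c)" using fin by (rule finite_active_edges)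
      have "(y0, g0) \<in> active_edges \<tau> T L a c - active_edges \<tau> T L ?a ?c"
        using that y0 g0 unfolding active_edges_def lower_def by auto
      moreover have "active_edges \<tau> T L ?a ?c \<subseteq> active_edges \<tau> T L a c"
        using t unfolding active_edges_def lower_def by (auto split: if_splits)
      ultimately show "active_edges \<tau> T L ?a ?c \<subset> active_edges \<tau> T L a c" by blast
    qed
    moreover have "A \<subseteq> L \<and> A \<noteq> L" if "A \<subseteq> L - {y0}" for A using that y0(1) by auto
    ultimately show "card (active_edges \<tau> T L ?a ?c) < card (active_edges \<tau> T L a c) \<or>
      (\<exists>A. A \<subseteq> L \<and> A \<noteq> {} \<and> A \<noteq> L \<and> sum ?a A = sum ?c (nbhd \<tau> T A))"
      using progress by blast
  qed
qed

text \<open>A tight proper subset splits the problem into two smaller ones;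
  otherwise an augmentation step reduces to data with fewer active edges or with a tight subset.\<close>
theorem fractional_hall:
  assumes "finite L" "finite T" "\<forall>y\<in>L. 0 \<le> a y" "\<forall>x. 0 \<le> c x" "hall_condition \<tau> T L a c"
  shows "\<exists>f. fractional_matching \<tau> T L a c f"
  using assms
proof (induction "card L + card (active_edges \<tau> T L a c)" arbitrary: L a c rule: less_induct)
  case less
  note fin = less.prems(1,2) and a0 = less.prems(3) and c0 = less.prems(4) and h = less.prems(5)
  have tight_split: "\<exists>f. fractional_matching \<tau> T L a' c' f"
    if small: "card (active_edges \<tau> T L a' c') \<le> card (active_edges \<tau> T L a c)"
      and a'0: "\<forall>y\<in>L. 0 \<le> a' y" and c'0: "\<forall>x. 0 \<le> c' x" and h': "hall_condition \<tau> T L a' c'"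
      and A: "A \<subseteq> L" "A \<noteq> {}" "A \<noteq> L" and tight: "sum a' A = sum c' (nbhd \<tau> T A)"
    for a' c' A
  proof -
    note smaller = split_measure_decreases[OF fin c'0 A, where a = a' and \<tau> = \<tau>]
    have "\<exists>f1. fractional_matching \<tau> T A a' c' f1"
      by (rule less.hyps) (use smaller(1) small fin a'0 c'0 A(1) hall_subset[OF h' A(1)]
        in \<open>auto intro: finite_subset\<close>)
    moreover have "\<exists>f2. fractional_matching \<tau> T (L - A) a' (residual \<tau> T A c') f2"
      by (rule less.hyps) (use smaller(2) small fin a'0 c'0 hall_residual[OF fin h' A(1) tight]
        in \<open>auto simp: residual_def\<close>)
    ultimately show ?thesis using matching_glue[OF fin(1) A(1) c'0] by blast
  qed
  show ?case
  proof (cases "\<exists>y\<in>L. 0 < a y")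
    case False
    then have "\<forall>y\<in>L. a y = 0" using a0 by force
    then show ?thesis using zero_demand_matching[OF _ c0] by blast
  next
    case True
    then obtain y0 where y0: "y0 \<in> L" "0 < a y0" by blast
    obtain g0 where g0: "g0 \<in> T" "0 < c (\<tau> y0 g0)" by (rule positive_capacity_edge[OF h y0])
    show ?thesis
    proof (cases "\<exists>A. A \<subseteq> L \<and> A \<noteq> {} \<and> A \<noteq> L \<and> sum a A = sum c (nbhd \<tau> T A)")
      case True
      then show ?thesis using tight_split[OF order.refl a0 c0 h] by blast
    next
      case False
      then have no_tight: "\<And>A. A \<subseteq> L \<Longrightarrow> A \<noteq> {} \<Longrightarrow> A \<noteq> L \<Longrightarrow> sum a A \<noteq> sum c (nbhd \<tau> T A)"
        by blast
      obtain a' c' where a'c': "\<forall>y\<in>L. 0 \<le> a' y" "\<forall>x. 0 \<le> c' x" "hall_condition \<tau> T L a' c'"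
        and small: "card (active_edges \<tau> T L a' c') \<le> card (active_edges \<tau> T L a c)"
        and lift: "\<And>f. fractional_matching \<tau> T L a' c' f \<Longrightarrow> \<exists>f. fractional_matching \<tau> T L a c f"
        and progress: "card (active_edges \<tau> T L a' c') < card (active_edges \<tau> T L a c) \<or>
          (\<exists>A. A \<subseteq> L \<and> A \<noteq> {} \<and> A \<noteq> L \<and> sum a' A = sum c' (nbhd \<tau> T A))"
        using augmentation[OF fin a0 c0 h y0 g0 no_tight] by blast
      have "\<exists>f. fractional_matching \<tau> T L a' c' f"
        using progress
      proof
        assume "card (active_edges \<tau> T L a' c') < card (active_edges \<tau> T L a c)"
        then show ?thesis using less.hyps[of L a' c'] fin a'c' by simp
      next
        assume "\<exists>A. A \<subseteq> L \<and> A \<noteq> {} \<and> A \<noteq> L \<and> sum a' A = sum c' (nbhd \<tau> T A)"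
        then show ?thesis using tight_split[OF small a'c'] by blast
      qed
      then show ?thesis using lift by blast
    qed
  qed
qed

lemma wmeas_nonneg: "(\<And>x. x \<in> A \<Longrightarrow> 0 \<le> w x) \<Longrightarrow> 0 \<le> wmeas w A"
  unfolding wmeas_def by (rule sum_nonneg)

lemma wmeas_pos: "finite A \<Longrightarrow> A \<noteq> {} \<Longrightarrow> (\<And>x. x \<in> A \<Longrightarrow> 0 < w x) \<Longrightarrow> 0 < wmeas w A"
  unfolding wmeas_def by (rule sum_pos)

lemma wmeas_mono:
  "finite B \<Longrightarrow> A \<subseteq> B \<Longrightarrow> (\<And>x. x \<in> B \<Longrightarrow> 0 \<le> w x) \<Longrightarrow> wmeas w A \<le> wmeas w B"
  unfolding wmeas_def by (rule sum_mono2) auto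

lemma wmeas_Un_le:
  "finite A \<Longrightarrow> finite B \<Longrightarrow> (\<And>x. x \<in> A \<inter> B \<Longrightarrow> 0 \<le> w x)
   \<Longrightarrow> wmeas w (A \<union> B) \<le> wmeas w A + wmeas w B"
  unfolding wmeas_def by (simp add: sum_Un) (meson IntD1 IntD2 sum_nonneg)

lemma wmeas_Un_Diff: "finite A \<Longrightarrow> finite F \<Longrightarrow> wmeas w (A \<union> F) = wmeas w F + wmeas w (A - F)"
  unfolding wmeas_def by (metis Un_Diff_cancel Un_commute finite_Diff sum.union_disjoint Diff_disjoint)

lemma wmeas_image_le:
  assumes "finite A" "\<And>x. x \<in> A \<Longrightarrow> 0 \<le> w (f x)" "\<And>x. x \<in> A \<Longrightarrow> w (f x) \<le> D * w x"
  shows "wmeas w (f ` A) \<le> D * wmeas w A"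
proof -
  have "wmeas w (f ` A) \<le> sum (w \<circ> f) A"
    unfolding wmeas_def using assms(1,2) by (intro sum_image_le) auto
  also have "\<dots> \<le> (\<Sum>x\<in>A. D * w x)" using assms(3) by (intro sum_mono) auto
  finally show ?thesis unfolding wmeas_def by (simp add: sum_distrib_left)
qed

definition boundary :: "('g \<Rightarrow> 'x \<Rightarrow> 'x) \<Rightarrow> 'g \<Rightarrow> 'x set \<Rightarrow> 'x set" where
  "boundary \<phi> g F = \<phi> g ` F - F"

definition almost_invariant ::
  "('g \<Rightarrow> 'x \<Rightarrow> 'x) \<Rightarrow> 'g set \<Rightarrow> ('x \<Rightarrow> real) \<Rightarrow> real \<Rightarrow> 'x set \<Rightarrow> bool" where
  "almost_invariant \<phi> S w e F \<longleftrightarrow> (\<forall>s\<in>S. wmeas w (boundary \<phi> s F) \<le> e * wmeas w F)"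

lemma balanced_upper_bound:
  assumes "balanced \<phi> S X w" and wpos: "\<forall>x\<in>X. 0 < w x"
  obtains C where "0 \<le> C" "\<And>s x. s \<in> S \<Longrightarrow> x \<in> X \<Longrightarrow> w (\<phi> s x) \<le> C * w x"
proof -
  obtain C where C: "C > 1" "\<forall>x\<in>X. \<forall>s\<in>S. w (\<phi> s x) / w x < C"
    using assms(1) unfolding balanced_def by blast
  have bound: "w (\<phi> s x) \<le> C * w x" if "s \<in> S" "x \<in> X" for s x
    using C(2) wpos that by (auto simp: divide_less_eq less_imp_le)
  show ?thesis by (rule that[of C]) (use C(1) bound in auto)
qed

context group_action
begin

lemma is_group: "group G"
  using group_hom group_hom.axioms(1) by blast

lemma carrier_one: "\<one> \<in> carrier G"
  using group.is_monoid[OF is_group] by (rule monoid.one_closed)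

lemma carrier_mult: "g \<in> carrier G \<Longrightarrow> h \<in> carrier G \<Longrightarrow> g \<otimes> h \<in> carrier G"
  using group.is_monoid[OF is_group] by (rule monoid.m_closed)

lemma carrier_inv: "g \<in> carrier G \<Longrightarrow> inv g \<in> carrier G"
  using is_group by (rule group.inv_closed)

lemma act_closed: "g \<in> carrier G \<Longrightarrow> x \<in> E \<Longrightarrow> \<phi> g x \<in> E"
  using element_image by blast

lemma act_one: "x \<in> E \<Longrightarrow> \<phi> \<one> x = x"
  using id_eq_one by (metis restrict_apply')

lemma act_inv_cancel: "g \<in> carrier G \<Longrightarrow> x \<in> E \<Longrightarrow> \<phi> g (\<phi> (inv g) x) = x"
  using composition_rule[of x g "inv g"] act_one carrier_inv group.r_inv[OF is_group] by simp

lemma image_one: "F \<subseteq> E \<Longrightarrow> \<phi> \<one> ` F = F"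
  using act_one by (simp add: subset_eq image_cong[OF refl, of F "\<phi> \<one>" id])

lemma boundary_mult_subset:
  assumes "F \<subseteq> E" "g \<in> carrier G" "h \<in> carrier G"
  shows "boundary \<phi> (g \<otimes> h) F \<subseteq> \<phi> g ` boundary \<phi> h F \<union> boundary \<phi> g F"
  using assms composition_rule unfolding boundary_def by fastforce

lemma generate_carrier: "S \<subseteq> carrier G \<Longrightarrow> g \<in> generate G S \<Longrightarrow> g \<in> carrier G"
  using group.generate_in_carrier[OF is_group] by blast

lemma boundary_closed: "F \<subseteq> E \<Longrightarrow> g \<in> carrier G \<Longrightarrow> boundary \<phi> g F \<subseteq> E"
  unfolding boundary_def using act_closed by blast

lemma distortion_bound:
  assumes bal: "balanced \<phi> S E w" and wpos: "\<forall>x\<in>E. 0 < w x"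
    and SG: "S \<subseteq> carrier G" and Sinv: "\<forall>s\<in>S. inv s \<in> S"
    and g: "g \<in> generate G S"
  shows "\<exists>D\<ge>0. \<forall>x\<in>E. w (\<phi> g x) \<le> D * w x"
proof -
  obtain C where C: "0 \<le> C" "\<And>s x. s \<in> S \<Longrightarrow> x \<in> E \<Longrightarrow> w (\<phi> s x) \<le> C * w x"
    using balanced_upper_bound[OF bal wpos] by blast
  show ?thesis
    using g
  proof (induction rule: generate.induct)
    case one
    show ?case using act_one by (intro exI[of _ 1]) auto
  next
    case (incl s)
    then show ?case using C by blast
  next
    case (inv s)
    then show ?case using C Sinv by blast
  next
    case (eng g h)
    obtain Dg Dh where Dg: "0 \<le> Dg" "\<forall>x\<in>E. w (\<phi> g x) \<le> Dg * w x"
      and Dh: "0 \<le> Dh" "\<forall>x\<in>E. w (\<phi> h x) \<le> Dh * w x"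
      using eng.IH by blast
    have gh: "g \<in> carrier G" "h \<in> carrier G" using eng.hyps generate_carrier[OF SG] by auto
    have "w (\<phi> (g \<otimes> h) x) \<le> (Dg * Dh) * w x" if x: "x \<in> E" for x
    proof -
      have "w (\<phi> (g \<otimes> h) x) = w (\<phi> g (\<phi> h x))" using composition_rule[OF x gh] by simp
      also have "\<dots> \<le> Dg * w (\<phi> h x)" using Dg(2) act_closed[OF gh(2) x] by blast
      also have "\<dots> \<le> Dg * (Dh * w x)" using Dh(2) x Dg(1) by (simp add: mult_left_mono)
      finally show ?thesis by simp
    qed
    then show ?case using Dg(1) Dh(1) by (intro exI[of _ "Dg * Dh"]) auto
  qed
qed

lemma boundary_bound:
  assumes bal: "balanced \<phi> S E w" and wpos: "\<forall>x\<in>E. 0 < w x"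
    and SG: "S \<subseteq> carrier G" and Sinv: "\<forall>s\<in>S. inv s \<in> S"
    and g: "g \<in> generate G S"
  shows "\<exists>K\<ge>0. \<forall>F e. finite F \<longrightarrow> F \<subseteq> E \<longrightarrow> 0 \<le> e \<longrightarrow> almost_invariant \<phi> S w e F
           \<longrightarrow> wmeas w (boundary \<phi> g F) \<le> K * e * wmeas w F"
  using g
proof (induction rule: generate.induct)
  case one
  have "boundary \<phi> \<one> F = {}" if "F \<subseteq> E" for F using image_one[OF that] by (simp add: boundary_def)
  then show ?case by (intro exI[of _ 0]) (simp add: wmeas_def)
next
  case (incl s)
  then show ?case unfolding almost_invariant_def by (intro exI[of _ 1]) auto
next
  case (inv s)
  then show ?case using Sinv unfolding almost_invariant_def by (intro exI[of _ 1]) auto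
next
  case (eng g h)
  obtain Kg Kh where Kg: "0 \<le> Kg" "\<forall>F e. finite F \<longrightarrow> F \<subseteq> E \<longrightarrow> 0 \<le> e \<longrightarrow> almost_invariant \<phi> S w e F
           \<longrightarrow> wmeas w (boundary \<phi> g F) \<le> Kg * e * wmeas w F"
    and Kh: "0 \<le> Kh" "\<forall>F e. finite F \<longrightarrow> F \<subseteq> E \<longrightarrow> 0 \<le> e \<longrightarrow> almost_invariant \<phi> S w e F
           \<longrightarrow> wmeas w (boundary \<phi> h F) \<le> Kh * e * wmeas w F"
    using eng.IH by blast
  obtain Dg where Dg: "0 \<le> Dg" "\<forall>x\<in>E. w (\<phi> g x) \<le> Dg * w x"
    using distortion_bound[OF bal wpos SG Sinv eng.hyps(1)] by blast
  have gh: "g \<in> carrier G" "h \<in> carrier G" using eng.hyps generate_carrier[OF SG] by auto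
  have "wmeas w (boundary \<phi> (g \<otimes> h) F) \<le> (Dg * Kh + Kg) * e * wmeas w F"
    if F: "finite F" "F \<subseteq> E" and e: "0 \<le> e" and inv: "almost_invariant \<phi> S w e F" for F e
  proof -
    let ?Bh = "boundary \<phi> h F" and ?Bg = "boundary \<phi> g F"
    have sets: "?Bh \<subseteq> E" "?Bg \<subseteq> E" "\<phi> g ` ?Bh \<subseteq> E" "finite ?Bh" "finite ?Bg"
      using boundary_closed[OF F(2)] gh act_closed F(1) by (auto simp: boundary_def)
    have nonneg: "\<And>x. x \<in> E \<Longrightarrow> 0 \<le> w x" using wpos by (simp add: less_imp_le)
    have "wmeas w (boundary \<phi> (g \<otimes> h) F) \<le> wmeas w (\<phi> g ` ?Bh \<union> ?Bg)"
      using boundary_mult_subset[OF F(2) gh] sets nonneg by (intro wmeas_mono) auto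
    also have "\<dots> \<le> wmeas w (\<phi> g ` ?Bh) + wmeas w ?Bg"
      using sets nonneg by (intro wmeas_Un_le) auto
    also have "wmeas w (\<phi> g ` ?Bh) \<le> Dg * wmeas w ?Bh"
      using sets nonneg Dg(2) act_closed[OF gh(1)] by (intro wmeas_image_le) auto
    also have "Dg * wmeas w ?Bh \<le> Dg * (Kh * e * wmeas w F)"
      using Kh(2) F e inv Dg(1) by (simp add: mult_left_mono)
    also have "wmeas w ?Bg \<le> Kg * e * wmeas w F" using Kg(2) F e inv by blast
    finally show ?thesis by (simp add: algebra_simps)
  qed
  then show ?case using Dg(1) Kg(1) Kh(1) by (intro exI[of _ "Dg * Kh + Kg"]) auto
qed

lemma folner_of_almost_invariant:
  assumes bal: "balanced \<phi> S E w" and wpos: "\<forall>x\<in>E. 0 < w x"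
    and SG: "S \<subseteq> carrier G" and Sinv: "\<forall>s\<in>S. inv s \<in> S" and gen: "generate G S = carrier G"
    and Fs: "\<And>n. finite (Fs n) \<and> Fs n \<noteq> {} \<and> Fs n \<subseteq> E \<and> almost_invariant \<phi> S w (1 / Suc n) (Fs n)"
  shows "w_folner G \<phi> E w Fs"
  unfolding w_folner_def
proof (rule conjI)
  show "\<forall>n. finite (Fs n) \<and> Fs n \<noteq> {} \<and> Fs n \<subseteq> E" using Fs by blast
next
  show "\<forall>\<epsilon>>0. \<forall>L. finite L \<and> L \<subseteq> carrier G \<longrightarrow>
    (\<exists>N. \<forall>n\<ge>N. \<forall>g\<in>L. wmeas w (\<phi> g ` Fs n \<union> Fs n) / wmeas w (Fs n) < 1 + \<epsilon>)"
  proof (intro allI impI)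
  fix \<epsilon> :: real and L assume \<epsilon>: "\<epsilon> > 0" and L: "finite L \<and> L \<subseteq> carrier G"
  have "\<forall>g\<in>L. \<exists>K\<ge>0. \<forall>F e. finite F \<longrightarrow> F \<subseteq> E \<longrightarrow> 0 \<le> e
      \<longrightarrow> almost_invariant \<phi> S w e F \<longrightarrow> wmeas w (boundary \<phi> g F) \<le> K * e * wmeas w F"
    using boundary_bound[OF bal wpos SG Sinv] gen L by blast
  then obtain K where K: "\<forall>g\<in>L. 0 \<le> K g \<and> (\<forall>F e. finite F \<longrightarrow> F \<subseteq> E \<longrightarrow> 0 \<le> e
      \<longrightarrow> almost_invariant \<phi> S w e F \<longrightarrow> wmeas w (boundary \<phi> g F) \<le> K g * e * wmeas w F)"
    by metis
  define M where "M = (\<Sum>g\<in>L. K g)"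
  have KM: "K g \<le> M" if "g \<in> L" for g
    unfolding M_def using K L that by (intro member_le_sum) auto
  obtain N :: nat where N: "M / \<epsilon> < real N" using reals_Archimedean2 by blast
  show "\<exists>N. \<forall>n\<ge>N. \<forall>g\<in>L. wmeas w (\<phi> g ` Fs n \<union> Fs n) / wmeas w (Fs n) < 1 + \<epsilon>"
  proof (intro exI allI impI ballI)
    fix n g assume n: "N \<le> n" and g: "g \<in> L"
    let ?F = "Fs n" and ?e = "1 / real (Suc n)"
    have F: "finite ?F" "?F \<noteq> {}" "?F \<subseteq> E" using Fs by auto
    have pos: "0 < wmeas w ?F" using F wpos by (intro wmeas_pos) auto
    have Kg: "\<forall>F e. finite F \<longrightarrow> F \<subseteq> E \<longrightarrow> 0 \<le> e \<longrightarrow> almost_invariant \<phi> S w e F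
        \<longrightarrow> wmeas w (boundary \<phi> g F) \<le> K g * e * wmeas w F" using K g by blast
    have "wmeas w (boundary \<phi> g ?F) \<le> K g * ?e * wmeas w ?F"
      by (rule Kg[rule_format]) (use Fs[of n] in auto)
    then have "wmeas w (boundary \<phi> g ?F) / wmeas w ?F \<le> K g * ?e"
      using pos by (simp add: divide_le_eq)
    also have "\<dots> \<le> M * ?e" using KM[OF g] by (simp add: divide_right_mono)
    also have "\<dots> < \<epsilon>"
    proof -
      have "M < \<epsilon> * real N" using N \<epsilon> by (simp add: divide_less_eq mult.commute)
      also have "\<dots> \<le> \<epsilon> * real (Suc n)" using n \<epsilon> by (intro mult_left_mono) auto
      finally show ?thesis by (simp add: field_simps)
    qed
    finally have "wmeas w (boundary \<phi> g ?F) / wmeas w ?F < \<epsilon>" .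
    moreover have "wmeas w (\<phi> g ` ?F \<union> ?F) = wmeas w ?F + wmeas w (boundary \<phi> g ?F)"
      unfolding boundary_def using F by (intro wmeas_Un_Diff) auto
    ultimately show "wmeas w (\<phi> g ` ?F \<union> ?F) / wmeas w ?F < 1 + \<epsilon>"
      using pos by (simp add: add_divide_distrib)
  qed
  qed
qed

lemma uniform_expansion:
  assumes bal: "balanced \<phi> S E w" and wpos: "\<forall>x\<in>E. 0 < w x"
    and SG: "S \<subseteq> carrier G" and Sinv: "\<forall>s\<in>S. inv s \<in> S" and gen: "generate G S = carrier G"
    and no_folner: "\<not> (\<exists>F. w_folner G \<phi> E w F)"
  obtains \<epsilon> where "\<epsilon> > 0"
    and "\<And>F. finite F \<Longrightarrow> F \<noteq> {} \<Longrightarrow> F \<subseteq> E \<Longrightarrow> \<exists>s\<in>S. \<epsilon> * wmeas w F < wmeas w (boundary \<phi> s F)"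
proof -
  have "\<exists>\<epsilon>>0. \<forall>F. finite F \<longrightarrow> F \<noteq> {} \<longrightarrow> F \<subseteq> E \<longrightarrow> (\<exists>s\<in>S. \<epsilon> * wmeas w F < wmeas w (boundary \<phi> s F))"
  proof (rule ccontr)
    assume no: "\<not> ?thesis"
    have small: "\<exists>F. finite F \<and> F \<noteq> {} \<and> F \<subseteq> E \<and> (\<forall>s\<in>S. wmeas w (boundary \<phi> s F) \<le> e * wmeas w F)"
      if "e > 0" for e
      using no that by (meson not_less)
    have "\<exists>F. finite F \<and> F \<noteq> {} \<and> F \<subseteq> E \<and> almost_invariant \<phi> S w (1 / Suc n) F" for n :: nat
      unfolding almost_invariant_def using small[of "1 / Suc n"] by simp
    then obtain Fs where "\<And>n. finite (Fs n) \<and> Fs n \<noteq> {} \<and> Fs n \<subseteq> E \<and> almost_invariant \<phi> S w (1 / Suc n) (Fs n)"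
      by metis
    then have "w_folner G \<phi> E w Fs" by (rule folner_of_almost_invariant[OF bal wpos SG Sinv gen])
    with no_folner show False by blast
  qed
  then show ?thesis using that by blast
qed

end

context group_action
begin

lemma UN_image_mult:
  assumes "A \<subseteq> E" "S' \<subseteq> carrier G" "T \<subseteq> carrier G"
  shows "(\<Union>r\<in>(\<lambda>(s, t). s \<otimes> t) ` (S' \<times> T). \<phi> r ` A) = (\<Union>s\<in>S'. \<phi> s ` (\<Union>t\<in>T. \<phi> t ` A))"
  using assms composition_rule by (fastforce simp: subset_eq)

lemma one_step_growth:
  assumes wpos: "\<forall>x\<in>E. 0 < w x" and SG: "S \<subseteq> carrier G" and finS: "finite S"
    and expand: "\<And>F. finite F \<Longrightarrow> F \<noteq> {} \<Longrightarrow> F \<subseteq> E \<Longrightarrow> \<exists>s\<in>S. \<epsilon> * wmeas w F < wmeas w (boundary \<phi> s F)"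
    and F: "finite F" "F \<subseteq> E"
  shows "(1 + \<epsilon>) * wmeas w F \<le> wmeas w (\<Union>s\<in>insert \<one> S. \<phi> s ` F)"
proof (cases "F = {}")
  case True
  then show ?thesis by (simp add: wmeas_def)
next
  case False
  then obtain s where s: "s \<in> S" "\<epsilon> * wmeas w F < wmeas w (boundary \<phi> s F)" using expand F by blast
  have "\<phi> s ` F \<union> F \<subseteq> (\<Union>s\<in>insert \<one> S. \<phi> s ` F)" using s(1) image_one[OF F(2)] by blast
  moreover have "(\<Union>s\<in>insert \<one> S. \<phi> s ` F) \<subseteq> E" using F(2) SG act_closed carrier_one by auto
  then have "0 \<le> w x" if "x \<in> (\<Union>s\<in>insert \<one> S. \<phi> s ` F)" for x
    using that wpos by (meson less_imp_le subsetD)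
  ultimately have "wmeas w (\<phi> s ` F \<union> F) \<le> wmeas w (\<Union>s\<in>insert \<one> S. \<phi> s ` F)"
    using finS F(1) by (intro wmeas_mono) auto
  moreover have "wmeas w (\<phi> s ` F \<union> F) = wmeas w F + wmeas w (boundary \<phi> s F)"
    unfolding boundary_def using F(1) by (intro wmeas_Un_Diff) auto
  ultimately show ?thesis using s(2) by (simp add: algebra_simps)
qed

lemma iterated_growth:
  assumes wpos: "\<forall>x\<in>E. 0 < w x" and SG: "S \<subseteq> carrier G" and finS: "finite S" and \<epsilon>: "0 \<le> \<epsilon>"
    and expand: "\<And>F. finite F \<Longrightarrow> F \<noteq> {} \<Longrightarrow> F \<subseteq> E \<Longrightarrow> \<exists>s\<in>S. \<epsilon> * wmeas w F < wmeas w (boundary \<phi> s F)"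
  shows "\<exists>T. finite T \<and> T \<subseteq> carrier G \<and>
    (\<forall>A. finite A \<longrightarrow> A \<subseteq> E \<longrightarrow> (1 + \<epsilon>) ^ k * wmeas w A \<le> wmeas w (\<Union>t\<in>T. \<phi> t ` A))"
proof (induction k)
  case 0
  show ?case using image_one carrier_one by (intro exI[of _ "{\<one>}"]) auto
next
  case (Suc k)
  then obtain T where T: "finite T" "T \<subseteq> carrier G"
    and grow: "\<And>A. finite A \<Longrightarrow> A \<subseteq> E \<Longrightarrow> (1 + \<epsilon>) ^ k * wmeas w A \<le> wmeas w (\<Union>t\<in>T. \<phi> t ` A)"
    by blast
  define S' where "S' = insert \<one> S"
  define T' where "T' = (\<lambda>(s, t). s \<otimes> t) ` (S' \<times> T)"
  have S': "finite S'" "S' \<subseteq> carrier G"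
    unfolding S'_def using finS SG carrier_one by auto
  have T': "finite T'" "T' \<subseteq> carrier G"
    unfolding T'_def using S' T carrier_mult by auto
  have "(1 + \<epsilon>) ^ Suc k * wmeas w A \<le> wmeas w (\<Union>t\<in>T'. \<phi> t ` A)" if A: "finite A" "A \<subseteq> E" for A
  proof -
    define U where "U = (\<Union>t\<in>T. \<phi> t ` A)"
    have U: "finite U" "U \<subseteq> E" unfolding U_def using A T act_closed by auto
    have "(1 + \<epsilon>) ^ Suc k * wmeas w A = (1 + \<epsilon>) * ((1 + \<epsilon>) ^ k * wmeas w A)" by simp
    also have "\<dots> \<le> (1 + \<epsilon>) * wmeas w U"
      unfolding U_def using grow[OF A] \<epsilon> by (intro mult_left_mono) auto
    also have "\<dots> \<le> wmeas w (\<Union>s\<in>S'. \<phi> s ` U)"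
      unfolding S'_def by (rule one_step_growth[OF wpos SG finS expand U])
    also have "(\<Union>s\<in>S'. \<phi> s ` U) = (\<Union>t\<in>T'. \<phi> t ` A)"
      unfolding U_def T'_def using UN_image_mult[OF A(2) S'(2) T(2)] by simp
    finally show ?thesis .
  qed
  then show ?case using T' by blast
qed

lemma tripling_set:
  assumes wpos: "\<forall>x\<in>E. 0 < w x" and SG: "S \<subseteq> carrier G" and finS: "finite S" and \<epsilon>: "0 < \<epsilon>"
    and expand: "\<And>F. finite F \<Longrightarrow> F \<noteq> {} \<Longrightarrow> F \<subseteq> E \<Longrightarrow> \<exists>s\<in>S. \<epsilon> * wmeas w F < wmeas w (boundary \<phi> s F)"
  obtains T where "finite T" "T \<subseteq> carrier G"
    and "\<And>A. finite A \<Longrightarrow> A \<subseteq> E \<Longrightarrow> 3 * wmeas w A \<le> wmeas w (\<Union>t\<in>T. \<phi> t ` A)"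
proof -
  obtain k where k: "3 < (1 + \<epsilon>) ^ k" using real_arch_pow[of "1 + \<epsilon>" 3] \<epsilon> by auto
  obtain T where T: "finite T" "T \<subseteq> carrier G"
    and grow: "\<And>A. finite A \<Longrightarrow> A \<subseteq> E \<Longrightarrow> (1 + \<epsilon>) ^ k * wmeas w A \<le> wmeas w (\<Union>t\<in>T. \<phi> t ` A)"
    using iterated_growth[OF wpos SG finS less_imp_le[OF \<epsilon>] expand] by blast
  have "3 * wmeas w A \<le> wmeas w (\<Union>t\<in>T. \<phi> t ` A)" if "finite A" "A \<subseteq> E" for A
  proof -
    have "0 \<le> wmeas w A" using that wpos by (intro wmeas_nonneg) (auto simp: less_imp_le)
    then have "3 * wmeas w A \<le> (1 + \<epsilon>) ^ k * wmeas w A" using k by (intro mult_right_mono) auto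
    also have "\<dots> \<le> wmeas w (\<Union>t\<in>T. \<phi> t ` A)" using grow[OF that] .
    finally show ?thesis .
  qed
  then show ?thesis using that T by blast
qed

lemma nbhd_action: "nbhd (\<lambda>y g. \<phi> g y) T A = (\<Union>t\<in>T. \<phi> t ` A)"
  unfolding nbhd_def by auto

lemma hall_of_tripling:
  assumes wpos: "\<forall>x\<in>E. 0 < w x" and T: "finite T" "T \<subseteq> carrier G"
    and triple: "\<And>A. finite A \<Longrightarrow> A \<subseteq> E \<Longrightarrow> 3 * wmeas w A \<le> wmeas w (\<Union>t\<in>T. \<phi> t ` A)"
    and L: "finite L" "L \<subseteq> E"
  shows "hall_condition (\<lambda>y g. \<phi> g y) T L w (\<lambda>x. if x \<in> E then w x / 3 else 0)"
  unfolding hall_condition_def nbhd_action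
proof (intro allI impI)
  fix A assume "A \<subseteq> L"
  then have A: "finite A" "A \<subseteq> E" using L by (auto intro: finite_subset)
  have "(\<Union>t\<in>T. \<phi> t ` A) \<subseteq> E" using A(2) T(2) act_closed by auto
  then have "sum (\<lambda>x. if x \<in> E then w x / 3 else 0) (\<Union>t\<in>T. \<phi> t ` A)
      = sum (\<lambda>x. w x / 3) (\<Union>t\<in>T. \<phi> t ` A)"
    by (intro sum.cong) auto
  then have "sum (\<lambda>x. if x \<in> E then w x / 3 else 0) (\<Union>t\<in>T. \<phi> t ` A) = wmeas w (\<Union>t\<in>T. \<phi> t ` A) / 3"
    unfolding wmeas_def by (simp add: sum_divide_distrib)
  then show "sum w A \<le> sum (\<lambda>x. if x \<in> E then w x / 3 else 0) (\<Union>t\<in>T. \<phi> t ` A)"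
    using triple[OF A] unfolding wmeas_def by simp
qed

end

definition compression_at ::
  "('g, 'b) monoid_scheme \<Rightarrow> ('g \<Rightarrow> 'x \<Rightarrow> 'x) \<Rightarrow> ('x \<Rightarrow> real) \<Rightarrow> 'g set \<Rightarrow> ('g \<times> 'x \<Rightarrow> real) \<Rightarrow> 'x \<Rightarrow> bool"
  where
  "compression_at G \<phi> w T p x \<longleftrightarrow>
     (\<Sum>g\<in>T. p (g, x)) = 1 \<and>
     (\<Sum>g\<in>T. p (g, \<phi> (inv\<^bsub>G\<^esub> g) x) * w (\<phi> (inv\<^bsub>G\<^esub> g) x)) \<le> w x / 3"

lemma closed_compression_at:
  fixes G :: "('g, 'b) monoid_scheme" and \<phi> :: "'g \<Rightarrow> 'x \<Rightarrow> 'x"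
  shows "closed {p. compression_at G \<phi> w T p x}"
proof -
  have "continuous_on UNIV (\<lambda>p :: 'g \<times> 'x \<Rightarrow> real. \<Sum>g\<in>T. p (g, x))"
    "continuous_on UNIV (\<lambda>p :: 'g \<times> 'x \<Rightarrow> real.
       \<Sum>g\<in>T. p (g, \<phi> (inv\<^bsub>G\<^esub> g) x) * w (\<phi> (inv\<^bsub>G\<^esub> g) x))"
    by (intro continuous_intros; simp)+
  then show ?thesis
    unfolding compression_at_def Collect_conj_eq
    by (intro closed_Int closed_Collect_eq closed_Collect_le continuous_on_const)
qed

lemma unit_cube_compact: "compact {p :: 'a \<Rightarrow> real. \<forall>i. p i \<in> {0..1}}"
proof -
  have "compactin (product_topology (\<lambda>_. euclidean) UNIV) (PiE UNIV (\<lambda>_::'a. {0..(1::real)}))"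
    by (simp add: compactin_PiE)
  moreover have "PiE UNIV (\<lambda>_::'a. {0..(1::real)}) = {p. \<forall>i. p i \<in> {0..1}}"
    by (auto simp: PiE_def Pi_def)
  ultimately show ?thesis by (simp add: euclidean_product_topology)
qed

context group_action
begin

text \<open>On a finite set Y, a fractional matching of the points reaching Y, normalised by the
  weights, is a profile compressing at every point of Y.\<close>
lemma compression_on_finite_set:
  assumes wpos: "\<forall>x\<in>E. 0 < w x" and T: "finite T" "T \<subseteq> carrier G"
    and triple: "\<And>A. finite A \<Longrightarrow> A \<subseteq> E \<Longrightarrow> 3 * wmeas w A \<le> wmeas w (\<Union>t\<in>T. \<phi> t ` A)"
    and Y: "finite Y" "Y \<subseteq> E"
  shows "\<exists>p. (\<forall>i. p i \<in> {0..1}) \<and> (\<forall>x\<in>Y. compression_at G \<phi> w T p x)"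
proof -
  let ?c = "\<lambda>x. if x \<in> E then w x / 3 else 0"
  define L where "L = Y \<union> (\<Union>x\<in>Y. (\<lambda>g. \<phi> (inv g) x) ` T)"
  have L: "finite L" "L \<subseteq> E" unfolding L_def using Y T by (auto intro!: act_closed carrier_inv)
  have wL: "0 < w y" if "y \<in> L" for y using that L wpos by auto
  obtain f where "fractional_matching (\<lambda>y g. \<phi> g y) T L w ?c f"
    using fractional_hall[OF L(1) T(1) _ _ hall_of_tripling[OF wpos T triple L]] wL wpos
    by (force simp: less_imp_le)
  then have f0: "\<And>y g. 0 \<le> f y g" and fsum: "\<And>y. y \<in> L \<Longrightarrow> sum (f y) T = w y"
    and fload: "\<And>x. load (\<lambda>y g. \<phi> g y) T L f x \<le> ?c x"
    unfolding fractional_matching_def by blast+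
  define p where "p = (\<lambda>(g, y). if y \<in> L \<and> g \<in> T then f y g / w y else 0)"
  have "p i \<in> {0..1}" for i
  proof -
    obtain g y where i: "i = (g, y)" by fastforce
    have "f y g \<le> w y" if "y \<in> L" "g \<in> T"
      using member_le_sum[of g T "f y"] T(1) f0 fsum[OF that(1)] that(2) by simp
    then show ?thesis using wL f0[of y g] unfolding p_def i by auto
  qed
  moreover have "compression_at G \<phi> w T p x" if x: "x \<in> Y" for x
  proof -
    have xL: "x \<in> L" and xE: "x \<in> E" using x Y unfolding L_def by auto
    have "(\<Sum>g\<in>T. p (g, x)) = sum (f x) T / w x"
      unfolding p_def using xL by (simp add: sum_divide_distrib)
    then have row: "(\<Sum>g\<in>T. p (g, x)) = 1" using fsum[OF xL] wL[OF xL] by simp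
    have preL: "\<phi> (inv g) x \<in> L" if "g \<in> T" for g using that x unfolding L_def by blast
    have "p (g, \<phi> (inv g) x) * w (\<phi> (inv g) x) = f (\<phi> (inv g) x) g" if "g \<in> T" for g
      using preL[OF that] wL[OF preL[OF that]] that unfolding p_def by simp
    then have "(\<Sum>g\<in>T. p (g, \<phi> (inv g) x) * w (\<phi> (inv g) x)) = (\<Sum>g\<in>T. f (\<phi> (inv g) x) g)"
      by (rule sum.cong[OF refl])
    also have "\<dots> \<le> (\<Sum>g\<in>T. \<Sum>y\<in>L. if \<phi> g y = x then f y g else 0)"
    proof (rule sum_mono)
      fix g assume g: "g \<in> T"
      have "\<phi> g (\<phi> (inv g) x) = x" using act_inv_cancel g T(2) xE by blast
      then show "f (\<phi> (inv g) x) g \<le> (\<Sum>y\<in>L. if \<phi> g y = x then f y g else 0)"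
        using member_le_sum[of "\<phi> (inv g) x" L "\<lambda>y. if \<phi> g y = x then f y g else 0"]
          preL[OF g] L(1) f0 by simp
    qed
    also have "\<dots> = load (\<lambda>y g. \<phi> g y) T L f x" unfolding load_def by (rule sum.swap)
    also have "\<dots> \<le> w x / 3" using fload[of x] xE by simp
    finally show ?thesis using row unfolding compression_at_def by simp
  qed
  ultimately show ?thesis by blast
qed

text \<open>Compactness of the unit cube glues these finite profiles into a w-compression system.\<close>
lemma compression_system_of_tripling:
  assumes wpos: "\<forall>x\<in>E. 0 < w x" and T: "finite T" "T \<subseteq> carrier G"
    and triple: "\<And>A. finite A \<Longrightarrow> A \<subseteq> E \<Longrightarrow> 3 * wmeas w A \<le> wmeas w (\<Union>t\<in>T. \<phi> t ` A)"
  shows "\<exists>\<Psi>. w_compression_system G \<phi> E w T \<Psi>"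
proof -
  define cube where "cube = {p :: 'a \<times> 'c \<Rightarrow> real. \<forall>i. p i \<in> {0..1}}"
  have "cube \<inter> (\<Inter>x\<in>E. {p. compression_at G \<phi> w T p x}) \<noteq> {}"
  proof (rule compact_imp_fip_image)
    show "compact cube" unfolding cube_def by (rule unit_cube_compact)
    show "closed {p. compression_at G \<phi> w T p x}" for x by (rule closed_compression_at)
    show "cube \<inter> (\<Inter>x\<in>Y. {p. compression_at G \<phi> w T p x}) \<noteq> {}" if "finite Y" "Y \<subseteq> E" for Y
      using compression_on_finite_set[OF wpos T triple that] unfolding cube_def by blast
  qed
  then obtain p where p01: "\<forall>i. p i \<in> {0..1}" and comp: "\<And>x. x \<in> E \<Longrightarrow> compression_at G \<phi> w T p x"
    unfolding cube_def by blast
  have "w_compression_system G \<phi> E w T (\<lambda>g y. p (g, y))"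
    unfolding w_compression_system_def
  proof (intro conjI)
    show "finite T" "T \<subseteq> carrier G" using T by auto
    show "\<exists>B. \<forall>g\<in>T. \<forall>x\<in>E. 0 \<le> p (g, x) \<and> p (g, x) \<le> B"
      using p01 by (intro exI[of _ 1]) auto
    show "\<forall>x\<in>E. (\<Sum>g\<in>T. p (g, x)) = 1 \<and>
        (\<Sum>g\<in>T. p (g, \<phi> (inv g) x) * (w (\<phi> (inv g) x) / w x)) < 1 / 2"
    proof
      fix x assume xE: "x \<in> E"
      have "(\<Sum>g\<in>T. p (g, \<phi> (inv g) x) * (w (\<phi> (inv g) x) / w x))
          = (\<Sum>g\<in>T. p (g, \<phi> (inv g) x) * w (\<phi> (inv g) x)) / w x"
        by (simp add: sum_divide_distrib)
      also have "\<dots> \<le> (w x / 3) / w x"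
        using comp[OF xE] wpos xE unfolding compression_at_def by (simp add: divide_right_mono)
      also have "\<dots> < 1 / 2" using wpos xE by simp
      finally show "(\<Sum>g\<in>T. p (g, x)) = 1 \<and>
          (\<Sum>g\<in>T. p (g, \<phi> (inv g) x) * (w (\<phi> (inv g) x) / w x)) < 1 / 2"
        using comp[OF xE] unfolding compression_at_def by simp
    qed
  qed
  then show ?thesis by blast
qed

end

theorem proposition2p3:
  fixes G :: "('g, 'b) monoid_scheme" (structure)
    and S :: "'g set" and X :: "'x set" and \<phi> :: "'g \<Rightarrow> 'x \<Rightarrow> 'x"
    and w :: "'x \<Rightarrow> real"
  assumes "group G"
    and "finite S" and "S \<subseteq> carrier G" and "\<forall>s\<in>S. inv s \<in> S"
    and "generate G S = carrier G"
    and "group_action G X \<phi>"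
    and "countable X"
    and "\<forall>x\<in>X. w x > 0"
    and "balanced \<phi> S X w"
    and "\<not> (\<exists>F. w_folner G \<phi> X w F)"
  shows "\<exists>T \<Psi>. w_compression_system G \<phi> X w T \<Psi>"
proof -
  interpret group_action G X \<phi> by (fact assms(6))
  have wpos: "\<forall>x\<in>X. 0 < w x" using assms(8) by simp
  obtain \<epsilon> where "\<epsilon> > 0"
    and expand: "\<And>F. finite F \<Longrightarrow> F \<noteq> {} \<Longrightarrow> F \<subseteq> X \<Longrightarrow>
      \<exists>s\<in>S. \<epsilon> * wmeas w F < wmeas w (boundary \<phi> s F)"
    using uniform_expansion[OF assms(9) wpos assms(3,4,5,10)] by blast
  obtain T where "finite T" "T \<subseteq> carrier G"
    and triple: "\<And>A. finite A \<Longrightarrow> A \<subseteq> X \<Longrightarrow> 3 * wmeas w A \<le> wmeas w (\<Union>t\<in>T. \<phi> t ` A)"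
    using tripling_set[OF wpos assms(3,2) \<open>\<epsilon> > 0\<close> expand] by blast
  then show ?thesis using compression_system_of_tripling[OF wpos] by blast
qed

end
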